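(* Let $l\geq 2$ and $\phi_{K_l}(x,y)=S_{l-1}(\lambda)\alpha-S_{l-2}(\lambda)\beta$ be the Riley polynomial of $K_l$ as below. Then for each fixed real $x$, $\lim_{y\to\infty}(-1)^l\phi_{K_l}(x,y)=+\infty$.
   Context: $S_n$: $S_0=1$, $S_1=z$, $S_{n+1}=zS_n-S_{n-1}$. $\lambda(x,y)=9x^2-12x^4+4x^6-5y+10x^2y+2x^4y-4x^6y-11x^2y^2+8x^4y^2+x^6y^2+5y^3-4x^2y^3-3x^4y^3+3x^2y^4-y^5$, $\alpha(x,y)=1-4x^2+2x^4+2y-x^2y-x^4y-y^2+2x^2y^2-y^3$, $\beta(x,y)=-1+x^2-y$. $K_l$ is the two-bridge knot $K(10(l-1)+7,4(l-1)+3)$. *)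

theory Defs
  imports Complex_Main
begin

fun S :: "nat \<Rightarrow> real \<Rightarrow> real" where
  "S 0 z = 1"
| "S (Suc 0) z = z"
| "S (Suc (Suc n)) z = z * S (Suc n) z - S n z"

definition lam :: "real \<Rightarrow> real \<Rightarrow> real" where
  "lam x y = 9*x^2 - 12*x^4 + 4*x^6 - 5*y + 10*x^2*y + 2*x^4*y - 4*x^6*y
     - 11*x^2*y^2 + 8*x^4*y^2 + x^6*y^2 + 5*y^3 - 4*x^2*y^3 - 3*x^4*y^3
     + 3*x^2*y^4 - y^5"

definition alpha :: "real \<Rightarrow> real \<Rightarrow> real" where
  "alpha x y = 1 - 4*x^2 + 2*x^4 + 2*y - x^2*y - x^4*y - y^2 + 2*x^2*y^2 - y^3"

definition beta :: "real \<Rightarrow> real \<Rightarrow> real" where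
  "beta x y = -1 + x^2 - y"

text \<open>Riley polynomial of the two-bridge knot K_l = K(10(l-1)+7, 4(l-1)+3), l >= 2.\<close>
definition phiK :: "nat \<Rightarrow> real \<Rightarrow> real \<Rightarrow> real" where
  "phiK l x y = S (l - 1) (lam x y) * alpha x y - S (l - 2) (lam x y) * beta x y"

end

theory Submission
  imports Defs "HOL-Real_Asymp.Real_Asymp"
begin

text \<open>As \<open>y \<to> \<infinity>\<close> we have \<open>\<lambda> \<sim> -y\<^sup>5\<close>, \<open>\<alpha> \<sim> -y\<^sup>3\<close> and \<open>\<beta> \<sim> -y\<close>. Since
  \<open>S\<^sub>n(-z) = (-1)\<^sup>n S\<^sub>n(z)\<close>, the sign \<open>(-1)\<^sup>l\<close> turns \<open>\<phi>\<close> into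
  \<open>S\<^sub>l\<^sub>-\<^sub>1(-\<lambda>)(-\<alpha>) + S\<^sub>l\<^sub>-\<^sub>2(-\<lambda>)(-\<beta>)\<close>. For arguments \<open>w \<ge> 2\<close> the Chebyshev-type
  values \<open>S\<^sub>n(w)\<close> are at least 1, so this is eventually bounded below by \<open>-\<alpha> \<to> \<infinity>\<close>.\<close>

lemma S_uminus: "S n (- z) = (-1) ^ n * S n z"
  by (induction n z rule: S.induct) (auto simp: algebra_simps)

lemma S_ge_one_and_mono:
  assumes "w \<ge> 2"
  shows "1 \<le> S n w \<and> S n w \<le> S (Suc n) w"
proof (induction n)
  case 0
  then show ?case using assms by simp
next
  case (Suc n)
  then have "(w - 1) * S (Suc n) w \<ge> 1 * S (Suc n) w"
    using assms by (intro mult_right_mono) auto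
  then have "w * S (Suc n) w \<ge> S (Suc n) w + S (Suc n) w"
    by (simp add: algebra_simps)
  moreover have "S (Suc (Suc n)) w = w * S (Suc n) w - S n w"
    by simp
  ultimately show ?case using Suc.IH by linarith
qed

lemma S_ge_one: "w \<ge> 2 \<Longrightarrow> 1 \<le> S n w"
  using S_ge_one_and_mono by blast

lemma S_combination_tendsto_at_top:
  assumes w: "eventually (\<lambda>y. w y \<ge> 2) F"
    and a: "filterlim a at_top F"
    and b: "eventually (\<lambda>y. b y \<ge> 0) F"
  shows "filterlim (\<lambda>y. S (Suc m) (w y) * a y + S m (w y) * b y) at_top F"
proof (rule filterlim_at_top_mono[OF a])
  have "eventually (\<lambda>y. a y \<ge> 0) F"
    using a by (simp add: filterlim_at_top)
  with w b show "eventually (\<lambda>y. a y \<le> S (Suc m) (w y) * a y + S m (w y) * b y) F"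
  proof eventually_elim
    case (elim y)
    have "1 * a y \<le> S (Suc m) (w y) * a y"
      using elim S_ge_one by (intro mult_right_mono) auto
    moreover have "0 \<le> S m (w y) * b y"
      using elim S_ge_one[of "w y" m] by simp
    ultimately show ?case by simp
  qed
qed

lemma signed_phiK:
  "(-1) ^ Suc (Suc m) * phiK (Suc (Suc m)) x y
     = S (Suc m) (- lam x y) * (- alpha x y) + S m (- lam x y) * (- beta x y)"
  unfolding phiK_def S_uminus by (simp add: algebra_simps)

lemma neg_lam_eventually_ge_two: "eventually (\<lambda>y. - lam x y \<ge> 2) at_top"
  unfolding lam_def by real_asymp

lemma neg_alpha_tendsto_at_top: "filterlim (\<lambda>y. - alpha x y) at_top at_top"
  unfolding alpha_def by real_asymp

lemma neg_beta_eventually_nonneg: "eventually (\<lambda>y. - beta x y \<ge> 0) at_top"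
  unfolding beta_def by real_asymp

theorem lemma6p6:
  fixes l :: nat and x :: real
  assumes "l \<ge> 2"
  shows "filterlim (\<lambda>y. (-1) ^ l * phiK l x y) at_top at_top"
proof -
  obtain m where "l = Suc (Suc m)"
    using assms by (metis add_2_eq_Suc le_Suc_ex)
  then show ?thesis
    using S_combination_tendsto_at_top[OF neg_lam_eventually_ge_two
        neg_alpha_tendsto_at_top neg_beta_eventually_nonneg, where m=m]
    by (simp only: signed_phiK)
qed

end
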